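(* Let $F$ be a finite-dimensional subspace of $c_0$ which is an ideal in $c_0$. Then $F^*$ is (isometrically) a subspace of $\ell_1$ which is $k$-strictly convex for some $k\in\mathbb N$.
   Context: $c_0$ carries the sup norm and $c_0^*=\ell_1$. A closed subspace $Y$ of $X$ is an ideal in $X$ if there is a linear projection $P$ on $X^*$ with $\|P\|=1$ and $\ker P=Y^\perp=\{x^*\in X^*:x^*|_Y=0\}$; then $Y^*$ is isometric to the range of $P$. A normed space $E$ is $k$-strictly convex if for any $k+1$ linearly independent $x_1,\dots,x_{k+1}\in S_E$ one has $\|\sum_{i=1}^{k+1}x_i\|<k+1$. *)

theory Defs
  imports "HOL-Analysis.Analysis"
begin

definition c0 :: "(nat \<Rightarrow> real) set" where
  "c0 = {x. x \<longlonglongrightarrow> 0}"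

definition supnorm :: "(nat \<Rightarrow> real) \<Rightarrow> real" where
  "supnorm x = Sup (range (\<lambda>n. \<bar>x n\<bar>))"

definition l1 :: "(nat \<Rightarrow> real) set" where
  "l1 = {a. summable (\<lambda>n. \<bar>a n\<bar>)}"

definition l1norm :: "(nat \<Rightarrow> real) \<Rightarrow> real" where
  "l1norm a = (\<Sum>n. \<bar>a n\<bar>)"

text \<open>Duality pairing identifying the dual of c0 with l1.\<close>
definition pair :: "(nat \<Rightarrow> real) \<Rightarrow> (nat \<Rightarrow> real) \<Rightarrow> real" where
  "pair a x = (\<Sum>n. a n * x n)"

definition is_subspace :: "(nat \<Rightarrow> real) set \<Rightarrow> bool" where
  "is_subspace S \<longleftrightarrow> (\<lambda>n. 0) \<in> S \<and>
     (\<forall>x\<in>S. \<forall>y\<in>S. (\<lambda>n. x n + y n) \<in> S) \<and>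
     (\<forall>c. \<forall>x\<in>S. (\<lambda>n. c * x n) \<in> S)"

definition finite_dim :: "(nat \<Rightarrow> real) set \<Rightarrow> bool" where
  "finite_dim S \<longleftrightarrow> (\<exists>B. finite B \<and> S \<subseteq> {(\<lambda>n. \<Sum>b\<in>B. c b * b n) | c. True})"

definition closed_c0 :: "(nat \<Rightarrow> real) set \<Rightarrow> bool" where
  "closed_c0 Y \<longleftrightarrow> (\<forall>s x. (\<forall>j. s j \<in> Y) \<and> x \<in> c0 \<and>
       (\<lambda>j. supnorm (\<lambda>m. s j m - x m)) \<longlonglongrightarrow> 0 \<longrightarrow> x \<in> Y)"

definition annihilator :: "(nat \<Rightarrow> real) set \<Rightarrow> (nat \<Rightarrow> real) set" where
  "annihilator Y = {a \<in> l1. \<forall>y\<in>Y. pair a y = 0}"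

definition linear_on_l1 :: "((nat \<Rightarrow> real) \<Rightarrow> (nat \<Rightarrow> real)) \<Rightarrow> bool" where
  "linear_on_l1 P \<longleftrightarrow> (\<forall>a\<in>l1. \<forall>b\<in>l1. P (\<lambda>n. a n + b n) = (\<lambda>n. P a n + P b n)) \<and>
     (\<forall>c. \<forall>a\<in>l1. P (\<lambda>n. c * a n) = (\<lambda>n. c * P a n))"

definition opnorm_l1_eq_1 :: "((nat \<Rightarrow> real) \<Rightarrow> (nat \<Rightarrow> real)) \<Rightarrow> bool" where
  "opnorm_l1_eq_1 P \<longleftrightarrow> bdd_above {l1norm (P a) | a. a \<in> l1 \<and> l1norm a \<le> 1} \<and>
     Sup {l1norm (P a) | a. a \<in> l1 \<and> l1norm a \<le> 1} = 1"

definition is_ideal_c0 :: "(nat \<Rightarrow> real) set \<Rightarrow> bool" where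
  "is_ideal_c0 Y \<longleftrightarrow> Y \<subseteq> c0 \<and> is_subspace Y \<and> closed_c0 Y \<and>
     (\<exists>P. (\<forall>a\<in>l1. P a \<in> l1) \<and> linear_on_l1 P \<and> (\<forall>a\<in>l1. P (P a) = P a) \<and>
          opnorm_l1_eq_1 P \<and> {a \<in> l1. P a = (\<lambda>n. 0)} = annihilator Y)"

text \<open>Dual space of a finite-dimensional subspace F of c0: linear functionals on F
  (extended by 0 outside F), with the dual norm induced by the sup norm.\<close>
definition fdual :: "(nat \<Rightarrow> real) set \<Rightarrow> ((nat \<Rightarrow> real) \<Rightarrow> real) set" where
  "fdual F = {f. (\<forall>x\<in>F. \<forall>y\<in>F. f (\<lambda>n. x n + y n) = f x + f y) \<and>
                 (\<forall>c. \<forall>x\<in>F. f (\<lambda>n. c * x n) = c * f x) \<and>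
                 (\<forall>x. x \<notin> F \<longrightarrow> f x = 0)}"

definition dualnorm :: "(nat \<Rightarrow> real) set \<Rightarrow> ((nat \<Rightarrow> real) \<Rightarrow> real) \<Rightarrow> real" where
  "dualnorm F f = Sup {\<bar>f x\<bar> | x. x \<in> F \<and> supnorm x \<le> 1}"

definition k_strictly_convex_l1 :: "(nat \<Rightarrow> real) set \<Rightarrow> nat \<Rightarrow> bool" where
  "k_strictly_convex_l1 G k \<longleftrightarrow>
     (\<forall>x :: nat \<Rightarrow> nat \<Rightarrow> real.
        (\<forall>i\<le>k. x i \<in> G \<and> l1norm (x i) = 1) \<and>
        (\<forall>c. (\<lambda>n. \<Sum>i\<le>k. c i * x i n) = (\<lambda>n. 0) \<longrightarrow> (\<forall>i\<le>k. c i = 0))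
        \<longrightarrow> l1norm (\<lambda>n. \<Sum>i\<le>k. x i n) < real k + 1)"

end

theory Submission
  imports Defs "HOL-Library.Function_Algebras"
begin

(* Let P be the norm-one projection on l1 = c0* with kernel the annihilator of F.  Two
   l1-representatives of a functional f on F (sequences a with pair a x = f x on F) differ by an
   element of that kernel, so T f = P a is well defined; as a - P a lies in the kernel, P a
   represents f again.  Hence T is linear and injective, and its range lies in the span of the
   images under P of a biorthogonal system for a basis of F, so it has dimension at most dim F.
   T is isometric: ||P a|| >= ||f|| because P a represents f.  Conversely, a norm-preserving
   Hahn-Banach extension of f to F + span {e_0, ..., e_(M-1)} yields a finitely supported a_M
   with ||a_M|| <= ||f|| representing f up to the tails beyond M of the basis vectors.  Since P
   is contractive and P b only depends on the pairings of b with the basis, this gives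
   ||T f|| <= ||f|| + o(1).  Finally every space of dimension at most k is (vacuously)
   k-strictly convex. *)

section \<open>Sequences as a real vector space\<close>

instantiation "fun" :: (type, real_vector) real_vector
begin

definition scaleR_fun :: "real \<Rightarrow> ('a \<Rightarrow> 'b) \<Rightarrow> 'a \<Rightarrow> 'b"
  where "scaleR_fun c f = (\<lambda>x. c *\<^sub>R f x)"

instance
  by standard (auto simp: scaleR_fun_def fun_eq_iff scaleR_add_right scaleR_add_left)

end

(* Not a simp rule: simp would then expand every scalar multiple c *R a of sequences pointwise,
   so that lemmas about pair and P stated for such terms no longer apply.  The library simp rule
   plus_fun_apply has the same effect on sums and is occasionally deleted below. *)
lemma scaleR_fun_apply: "(c *\<^sub>R f) x = c *\<^sub>R f x"
  by (simp add: scaleR_fun_def)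

lemma sum_fun_apply: "(\<Sum>i\<in>I. f i) x = (\<Sum>i\<in>I. f i x)"
  by (induction I rule: infinite_finite_induct) auto

lemma is_subspace_iff_subspace: "is_subspace S \<longleftrightarrow> subspace S"
  unfolding is_subspace_def subspace_def zero_fun_def plus_fun_def scaleR_fun_def real_scaleR_def
  by blast

lemma finite_dim_obtains_basis:
  assumes "finite_dim F" "subspace F"
  obtains Y where "finite Y" "independent Y" "span Y = F"
proof -
  obtain B where B: "finite B" "F \<subseteq> {(\<lambda>n. \<Sum>b\<in>B. c b * b n) | c. True}"
    using assms(1) unfolding finite_dim_def by auto
  have FB: "F \<subseteq> span B"
  proof
    fix x
    assume "x \<in> F"
    then obtain c where "x = (\<lambda>n. \<Sum>b\<in>B. c b * b n)"
      using B(2) by auto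
    also have "\<dots> = (\<Sum>b\<in>B. c b *\<^sub>R b)"
      by (simp add: fun_eq_iff sum_fun_apply scaleR_fun_apply)
    finally show "x \<in> span B"
      by (simp add: span_sum span_scale span_base)
  qed
  obtain Y where Y: "Y \<subseteq> F" "independent Y" "F \<subseteq> span Y" "card Y = dim F"
    by (rule basis_exists)
  have "finite Y"
    using independent_span_bound[OF B(1) Y(2)] Y(1) FB by auto
  moreover have "span Y = F"
    using Y assms(2) by (intro span_subspace)
  ultimately show thesis
    using Y(2) that by blast
qed

section \<open>Bounded sequences and the sup norm\<close>

lemma subspace_c0: "subspace c0"
  unfolding subspace_def c0_def zero_fun_def plus_fun_def scaleR_fun_def real_scaleR_def
  by (auto intro: tendsto_add_zero tendsto_mult_right_zero)

lemma c0_imp_Bseq: "x \<in> c0 \<Longrightarrow> Bseq x"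
  unfolding c0_def by (auto intro: convergent_imp_Bseq convergentI)

lemma subspace_Bseq: "subspace {x :: nat \<Rightarrow> real. Bseq x}"
proof -
  have "Bseq (x + y)" if hx: "Bseq x" and hy: "Bseq y" for x y :: "nat \<Rightarrow> real"
  proof -
    obtain K L where "\<forall>n. \<bar>x n\<bar> \<le> K" "\<forall>n. \<bar>y n\<bar> \<le> L"
      using hx hy by (metis BseqE real_norm_def)
    then have "\<forall>n. norm ((x + y) n) \<le> K + L"
      by (auto intro: abs_triangle_ineq[THEN order_trans] add_mono)
    then show ?thesis
      by (intro BseqI') auto
  qed
  moreover have "Bseq (c *\<^sub>R x)" if hx: "Bseq x" for c and x :: "nat \<Rightarrow> real"
  proof -
    obtain K where "\<forall>n. \<bar>x n\<bar> \<le> K"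
      using hx by (metis BseqE real_norm_def)
    then have "\<forall>n. norm ((c *\<^sub>R x) n) \<le> \<bar>c\<bar> * K"
      by (auto simp: abs_mult scaleR_fun_apply intro: mult_left_mono)
    then show ?thesis
      by (intro BseqI') auto
  qed
  ultimately show ?thesis
    unfolding subspace_def zero_fun_def by auto
qed

lemma abs_le_supnorm: "Bseq x \<Longrightarrow> \<bar>x n\<bar> \<le> supnorm x"
  unfolding supnorm_def by (rule cSup_upper) (fastforce simp: bdd_above_def elim!: BseqE)+

lemma supnorm_le: "(\<And>n. \<bar>x n\<bar> \<le> B) \<Longrightarrow> supnorm x \<le> B"
  unfolding supnorm_def by (rule cSup_least) auto

lemma supnorm_nonneg: "Bseq x \<Longrightarrow> 0 \<le> supnorm x"
  using abs_le_supnorm[of x 0] by linarith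

lemma supnorm_zero [simp]: "supnorm 0 = 0"
  unfolding supnorm_def by simp

lemma supnorm_eq_0_iff:
  assumes "Bseq x"
  shows "supnorm x = 0 \<longleftrightarrow> x = 0"
proof
  assume "supnorm x = 0"
  then have "x n = 0" for n
    using abs_le_supnorm[OF assms, of n] by simp
  then show "x = 0"
    by (simp add: fun_eq_iff)
qed simp

lemma supnorm_triangle: "Bseq x \<Longrightarrow> Bseq y \<Longrightarrow> supnorm (x + y) \<le> supnorm x + supnorm y"
  by (rule supnorm_le) (auto intro: abs_triangle_ineq[THEN order_trans] add_mono abs_le_supnorm)

lemma supnorm_scaleR_le: "Bseq x \<Longrightarrow> supnorm (c *\<^sub>R x) \<le> \<bar>c\<bar> * supnorm x"
  by (rule supnorm_le) (simp add: abs_mult scaleR_fun_apply mult_left_mono abs_le_supnorm)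

lemma supnorm_scaleR:
  assumes x: "Bseq x"
  shows "supnorm (c *\<^sub>R x) = \<bar>c\<bar> * supnorm x"
proof (cases "c = 0")
  case False
  have "Bseq (c *\<^sub>R x)"
    using x
    using subspace_scale[OF subspace_Bseq, of x c] by simp
  then have "supnorm (inverse c *\<^sub>R (c *\<^sub>R x)) \<le> \<bar>inverse c\<bar> * supnorm (c *\<^sub>R x)"
    by (rule supnorm_scaleR_le)
  then have "\<bar>c\<bar> * supnorm x \<le> supnorm (c *\<^sub>R x)"
    using False by (simp add: abs_inverse field_simps)
  with supnorm_scaleR_le[OF x, of c] show ?thesis
    by linarith
qed simp

definition tail_seq :: "nat \<Rightarrow> (nat \<Rightarrow> real) \<Rightarrow> nat \<Rightarrow> real"
  where "tail_seq M x = (\<lambda>n. if n < M then 0 else x n)"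

definition truncate_seq :: "nat \<Rightarrow> (nat \<Rightarrow> real) \<Rightarrow> nat \<Rightarrow> real"
  where "truncate_seq M x = (\<lambda>n. if n < M then x n else 0)"

lemma truncate_plus_tail_seq: "truncate_seq M x + tail_seq M x = x"
  by (simp add: fun_eq_iff truncate_seq_def tail_seq_def)

lemma supnorm_tail_seq_tendsto_0:
  assumes "x \<in> c0"
  shows "(\<lambda>M. supnorm (tail_seq M x)) \<longlonglongrightarrow> 0"
proof (rule LIMSEQ_I)
  fix r :: real
  assume "0 < r"
  obtain N where N: "\<And>n. N \<le> n \<Longrightarrow> \<bar>x n\<bar> < r / 2"
    using LIMSEQ_D[of x 0 "r / 2"] assms \<open>0 < r\<close> unfolding c0_def by auto
  have "\<bar>supnorm (tail_seq M x)\<bar> < r" if "N \<le> M" for M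
  proof -
    have bound: "\<bar>tail_seq M x n\<bar> \<le> r / 2" for n
      using N[of n] \<open>0 < r\<close> that by (auto simp: tail_seq_def)
    then have "Bseq (tail_seq M x)"
      by (intro BseqI'[where K = "r / 2"]) simp
    moreover have "supnorm (tail_seq M x) \<le> r / 2"
      by (rule supnorm_le) (rule bound)
    ultimately show ?thesis
      using supnorm_nonneg \<open>0 < r\<close> by (simp add: abs_of_nonneg)
  qed
  then show "\<exists>N. \<forall>M\<ge>N. norm (supnorm (tail_seq M x) - 0) < r"
    by auto
qed

section \<open>The space \<open>\<ell>\<^sub>1\<close> and its pairing with bounded sequences\<close>

lemma subspace_l1: "subspace l1"
  unfolding subspace_def
proof (intro conjI ballI allI)
  show "0 \<in> l1"
    by (simp add: l1_def)
next
  fix a b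
  assume "a \<in> l1" "b \<in> l1"
  then have "summable (\<lambda>n. \<bar>a n\<bar> + \<bar>b n\<bar>)"
    unfolding l1_def by (simp add: summable_add)
  then have "summable (\<lambda>n. \<bar>a n + b n\<bar>)"
    by (rule summable_comparison_test') (simp add: abs_triangle_ineq)
  then show "a + b \<in> l1"
    by (simp add: l1_def)
next
  fix c a
  assume "a \<in> l1"
  then show "c *\<^sub>R a \<in> l1"
    unfolding l1_def by (simp add: scaleR_fun_apply abs_mult summable_mult)
qed

lemma l1norm_nonneg: "a \<in> l1 \<Longrightarrow> 0 \<le> l1norm a"
  unfolding l1norm_def l1_def by (auto intro: suminf_nonneg)

lemma l1norm_triangle:
  assumes "a \<in> l1" "b \<in> l1"
  shows "l1norm (a + b) \<le> l1norm a + l1norm b"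
proof -
  have sa: "summable (\<lambda>n. \<bar>a n\<bar>)" and sb: "summable (\<lambda>n. \<bar>b n\<bar>)"
    using assms unfolding l1_def by auto
  have "a + b \<in> l1"
    using subspace_l1 assms by (rule subspace_add)
  then have "summable (\<lambda>n. \<bar>a n + b n\<bar>)"
    by (simp add: l1_def)
  then have "l1norm (a + b) \<le> (\<Sum>n. \<bar>a n\<bar> + \<bar>b n\<bar>)"
    unfolding l1norm_def using sa sb by (intro suminf_le) (auto intro: summable_add abs_triangle_ineq)
  also have "\<dots> = l1norm a + l1norm b"
    unfolding l1norm_def using sa sb by (rule suminf_add[symmetric])
  finally show ?thesis .
qed

lemma l1norm_scaleR: "a \<in> l1 \<Longrightarrow> l1norm (c *\<^sub>R a) = \<bar>c\<bar> * l1norm a"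
  unfolding l1norm_def l1_def by (auto simp: abs_mult scaleR_fun_apply suminf_mult)

lemma l1norm_eq_0_iff: "a \<in> l1 \<Longrightarrow> l1norm a = 0 \<longleftrightarrow> a = 0"
  unfolding l1norm_def l1_def by (subst suminf_eq_zero_iff) (auto simp: fun_eq_iff)

lemma l1norm_sum_le:
  "(\<And>i. i \<in> I \<Longrightarrow> a i \<in> l1) \<Longrightarrow> l1norm (\<Sum>i\<in>I. a i) \<le> (\<Sum>i\<in>I. l1norm (a i))"
proof (induction I rule: infinite_finite_induct)
  case (insert i I)
  have "l1norm (\<Sum>i\<in>insert i I. a i) \<le> l1norm (a i) + l1norm (\<Sum>i\<in>I. a i)"
    unfolding sum.insert[OF insert.hyps] using insert.prems subspace_l1
    by (auto intro: l1norm_triangle subspace_sum)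
  also have "\<dots> \<le> l1norm (a i) + (\<Sum>i\<in>I. l1norm (a i))"
    using insert by simp
  also have "\<dots> = (\<Sum>i\<in>insert i I. l1norm (a i))"
    using insert.hyps by simp
  finally show ?case .
qed (simp_all add: l1norm_def)

lemma summable_abs_pair:
  assumes "a \<in> l1" "Bseq x"
  shows "summable (\<lambda>n. \<bar>a n * x n\<bar>)"
proof -
  obtain K where "\<forall>n. \<bar>x n\<bar> \<le> K"
    using assms(2) by (metis BseqE real_norm_def)
  then have bound: "norm \<bar>a n * x n\<bar> \<le> \<bar>a n\<bar> * K" for n
    by (simp add: abs_mult mult_left_mono)
  have "summable (\<lambda>n. \<bar>a n\<bar> * K)"
    using assms(1) unfolding l1_def by (simp add: summable_mult2)
  then show ?thesis
    by (rule summable_comparison_test') (rule bound)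
qed

lemma summable_pair: "a \<in> l1 \<Longrightarrow> Bseq x \<Longrightarrow> summable (\<lambda>n. a n * x n)"
  by (rule summable_rabs_cancel) (rule summable_abs_pair)

lemma abs_pair_le:
  assumes "a \<in> l1" "Bseq x"
  shows "\<bar>pair a x\<bar> \<le> l1norm a * supnorm x"
proof -
  have sa: "summable (\<lambda>n. \<bar>a n\<bar>)"
    using assms(1) unfolding l1_def by simp
  have "\<bar>pair a x\<bar> \<le> (\<Sum>n. \<bar>a n * x n\<bar>)"
    unfolding pair_def using summable_abs_pair[OF assms] by (rule summable_rabs)
  also have "\<dots> \<le> (\<Sum>n. \<bar>a n\<bar> * supnorm x)"
    using summable_abs_pair[OF assms] sa abs_le_supnorm[OF assms(2)]
    by (intro suminf_le) (auto simp: abs_mult intro: mult_left_mono summable_mult2)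
  also have "\<dots> = l1norm a * supnorm x"
    unfolding l1norm_def using sa by (rule suminf_mult2[symmetric])
  finally show ?thesis .
qed

lemma pair_add_left: "a \<in> l1 \<Longrightarrow> b \<in> l1 \<Longrightarrow> Bseq x \<Longrightarrow> pair (a + b) x = pair a x + pair b x"
  unfolding pair_def by (simp add: distrib_right suminf_add summable_pair)

lemma pair_diff_left: "a \<in> l1 \<Longrightarrow> b \<in> l1 \<Longrightarrow> Bseq x \<Longrightarrow> pair (a - b) x = pair a x - pair b x"
  unfolding pair_def by (simp add: left_diff_distrib suminf_diff summable_pair)

lemma pair_scaleR_left: "a \<in> l1 \<Longrightarrow> Bseq x \<Longrightarrow> pair (c *\<^sub>R a) x = c * pair a x"
  unfolding pair_def by (simp add: scaleR_fun_apply mult.assoc suminf_mult summable_pair)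

lemma pair_sum_scaleR_left:
  "(\<And>i. i \<in> I \<Longrightarrow> a i \<in> l1) \<Longrightarrow> Bseq x \<Longrightarrow>
    pair (\<Sum>i\<in>I. c i *\<^sub>R a i) x = (\<Sum>i\<in>I. c i * pair (a i) x)"
proof (induction I rule: infinite_finite_induct)
  case (insert i I)
  have ai: "c i *\<^sub>R a i \<in> l1" and aI: "(\<Sum>i\<in>I. c i *\<^sub>R a i) \<in> l1"
    using insert.prems subspace_l1 by (auto intro: subspace_sum subspace_scale)
  have "pair (\<Sum>i\<in>insert i I. c i *\<^sub>R a i) x = pair (c i *\<^sub>R a i) x + pair (\<Sum>i\<in>I. c i *\<^sub>R a i) x"
    unfolding sum.insert[OF insert.hyps] using ai aI insert.prems(2) by (rule pair_add_left)
  also have "\<dots> = c i * pair (a i) x + (\<Sum>i\<in>I. c i * pair (a i) x)"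
    using insert by (simp add: pair_scaleR_left)
  also have "\<dots> = (\<Sum>i\<in>insert i I. c i * pair (a i) x)"
    using insert.hyps by simp
  finally show ?case .
qed (simp_all add: pair_def)

lemma pair_add_right: "a \<in> l1 \<Longrightarrow> Bseq x \<Longrightarrow> Bseq y \<Longrightarrow> pair a (x + y) = pair a x + pair a y"
  unfolding pair_def by (simp add: distrib_left suminf_add summable_pair)

lemma pair_scaleR_right: "a \<in> l1 \<Longrightarrow> Bseq x \<Longrightarrow> pair a (c *\<^sub>R x) = c * pair a x"
  unfolding pair_def by (simp add: scaleR_fun_apply suminf_mult[symmetric] summable_pair algebra_simps)

lemma pair_eq_on_span:
  assumes a: "a \<in> l1" and g: "linear g" and Y: "\<And>y. y \<in> Y \<Longrightarrow> Bseq y"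
    and eq: "\<And>y. y \<in> Y \<Longrightarrow> pair a y = g y" and x: "x \<in> span Y"
  shows "pair a x = g x"
proof -
  have "pair a 0 = 0"
    by (simp add: pair_def)
  then have "subspace {x. Bseq x \<and> pair a x = g x}"
    using subspace_Bseq unfolding subspace_def
    by (auto simp: linear_0[OF g] linear_add[OF g] linear_scale[OF g]
        pair_add_right[OF a] pair_scaleR_right[OF a] simp del: plus_fun_apply)
  then show ?thesis
    using span_minimal[of Y "{x. Bseq x \<and> pair a x = g x}"] Y eq x by auto
qed

definition unit_seq :: "nat \<Rightarrow> nat \<Rightarrow> real"
  where "unit_seq k = (\<lambda>n. if n = k then 1 else 0)"

lemma mult_unit_seq [simp]: "c * unit_seq k n = (if n = k then c else 0)"
  by (simp add: unit_seq_def)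

lemma pair_unit_seq [simp]: "pair (unit_seq k) x = x k"
  unfolding pair_def using sums_single[of k x] by (simp add: mult.commute[of "unit_seq k _"] sums_iff)

lemma unit_seq_l1: "unit_seq k \<in> l1"
proof -
  have "(\<lambda>n. \<bar>unit_seq k n\<bar>) = (\<lambda>n. if n = k then 1 else 0)"
    by (simp add: unit_seq_def fun_eq_iff)
  then show ?thesis
    unfolding l1_def by simp
qed

lemma unit_seq_c0: "unit_seq k \<in> c0"
  unfolding c0_def mem_Collect_eq
  by (rule tendsto_eventually, rule eventually_sequentiallyI[of "Suc k"]) (simp add: unit_seq_def)

lemma truncate_seq_eq_sum: "truncate_seq M x = (\<Sum>n<M. x n *\<^sub>R unit_seq n)"
proof
  fix k
  have "(\<Sum>n<M. x n *\<^sub>R unit_seq n) k = (\<Sum>n<M. if k = n then x n else 0)"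
    by (simp add: sum_fun_apply scaleR_fun_apply)
  then show "truncate_seq M x k = (\<Sum>n<M. x n *\<^sub>R unit_seq n) k"
    by (simp add: truncate_seq_def)
qed

lemma sums_truncate_seq:
  assumes "\<And>n. f n 0 = 0"
  shows "(\<lambda>n. f n (truncate_seq M x n)) sums (\<Sum>n<M. f n (x n))"
proof -
  have "(\<lambda>n. f n (truncate_seq M x n)) sums (\<Sum>n<M. f n (truncate_seq M x n))"
    by (rule sums_finite) (auto simp: truncate_seq_def assms)
  then show ?thesis
    by (simp add: truncate_seq_def)
qed

lemma truncate_seq_l1: "truncate_seq M x \<in> l1"
  using sums_truncate_seq[of "\<lambda>_ v. \<bar>v\<bar>"] unfolding l1_def by (auto simp: sums_iff)

lemma l1norm_truncate_seq: "l1norm (truncate_seq M x) = (\<Sum>n<M. \<bar>x n\<bar>)"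
  using sums_truncate_seq[of "\<lambda>_ v. \<bar>v\<bar>"] unfolding l1norm_def by (auto simp: sums_iff)

lemma pair_truncate_seq: "pair (truncate_seq M a) x = (\<Sum>n<M. a n * x n)"
proof -
  have "(\<lambda>n. truncate_seq M a n * x n) sums (\<Sum>n<M. a n * x n)"
    using sums_truncate_seq[of "\<lambda>n v. v * x n" M a] by simp
  then show ?thesis
    unfolding pair_def by (simp add: sums_iff)
qed

section \<open>Biorthogonal systems in \<open>\<ell>\<^sub>1\<close>\<close>

lemma l1_functional_separating_from_span:
  assumes Y: "finite Y" "\<And>t. t \<in> Y \<Longrightarrow> Bseq t"
    and u: "\<And>t. t \<in> Y \<Longrightarrow> u t \<in> l1"
      "\<And>t t'. t \<in> Y \<Longrightarrow> t' \<in> Y \<Longrightarrow> pair (u t) t' = (if t = t' then 1 else 0)"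
    and y: "Bseq y" "y \<notin> span Y"
  shows "\<exists>v\<in>l1. pair v y = 1 \<and> (\<forall>t\<in>Y. pair v t = 0)"
proof -
  define z where "z = y - (\<Sum>t\<in>Y. pair (u t) y *\<^sub>R t)"
  have "z \<noteq> 0"
  proof
    assume "z = 0"
    then have "y = (\<Sum>t\<in>Y. pair (u t) y *\<^sub>R t)"
      unfolding z_def by simp
    also have "\<dots> \<in> span Y"
      by (intro span_sum span_scale span_base)
    finally show False
      using y(2) by simp
  qed
  then obtain n where n: "z n \<noteq> 0"
    by (auto simp: fun_eq_iff)
  \<comment> \<open>\<open>w\<close> kills \<open>Y\<close> and reads off the \<open>n\<close>-th coordinate of the residual \<open>z\<close> of \<open>y\<close>.\<close>
  define w where "w = unit_seq n - (\<Sum>t\<in>Y. t n *\<^sub>R u t)"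
  have sum_l1: "(\<Sum>t\<in>Y. t n *\<^sub>R u t) \<in> l1"
    using u(1) subspace_l1 by (auto intro: subspace_sum subspace_scale)
  then have w_l1: "w \<in> l1"
    unfolding w_def using unit_seq_l1 subspace_l1 by (auto intro: subspace_diff)
  have pair_w: "pair w x = x n - (\<Sum>t\<in>Y. t n * pair (u t) x)" if "Bseq x" for x
    unfolding w_def using that u(1) sum_l1 unit_seq_l1
    by (simp add: pair_diff_left pair_sum_scaleR_left)
  have "pair w y = z n"
    unfolding pair_w[OF y(1)] z_def by (simp add: sum_fun_apply scaleR_fun_apply mult.commute)
  moreover have "pair w t = 0" if t: "t \<in> Y" for t
  proof -
    have "(\<Sum>s\<in>Y. s n * pair (u s) t) = (\<Sum>s\<in>Y. if s = t then t n else 0)"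
      using t u(2) by (intro sum.cong) auto
    also have "\<dots> = t n"
      using t Y(1) by simp
    finally show ?thesis
      unfolding pair_w[OF Y(2)[OF t]] by simp
  qed
  ultimately show ?thesis
    using n w_l1 Y(2) y(1) subspace_l1
    by (intro bexI[of _ "(1 / z n) *\<^sub>R w"]) (auto simp: pair_scaleR_left subspace_scale)
qed

lemma biorthogonal_l1_exists:
  assumes "finite Y" "independent Y" "\<And>y. y \<in> Y \<Longrightarrow> Bseq y"
  shows "\<exists>u. (\<forall>y\<in>Y. u y \<in> l1) \<and> (\<forall>y\<in>Y. \<forall>y'\<in>Y. pair (u y) y' = (if y = y' then 1 else 0))"
  using assms
proof (induction Y rule: finite_induct)
  case (insert y Y)
  then have "independent Y" "y \<notin> span Y" and bdd: "\<And>t. t \<in> insert y Y \<Longrightarrow> Bseq t"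
    by (auto simp: independent_insert)
  moreover obtain u where u: "\<forall>t\<in>Y. u t \<in> l1"
    "\<forall>t\<in>Y. \<forall>t'\<in>Y. pair (u t) t' = (if t = t' then 1 else 0)"
    using insert calculation by auto
  ultimately obtain v where v: "v \<in> l1" "pair v y = 1" "\<forall>t\<in>Y. pair v t = 0"
    using l1_functional_separating_from_span[OF insert.hyps(1), of u y] by auto
  define u' where "u' t = (if t = y then v else u t - pair (u t) y *\<^sub>R v)" for t
  have "\<forall>t\<in>insert y Y. u' t \<in> l1"
    unfolding u'_def using u(1) v(1) subspace_l1 by (auto intro: subspace_diff subspace_scale)
  moreover have "pair (u' t) t' = (if t = t' then 1 else 0)" if "t \<in> insert y Y" "t' \<in> insert y Y" for t t'
    using that insert.hyps(2) u v bdd[OF that(2)] subspace_l1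
    by (auto simp: u'_def pair_diff_left pair_scaleR_left subspace_scale)
  ultimately show ?case
    by blast
qed simp

section \<open>Hahn--Banach extension across finitely many directions\<close>

definition sublinear_on :: "'a::real_vector set \<Rightarrow> ('a \<Rightarrow> real) \<Rightarrow> bool"
  where "sublinear_on W p \<longleftrightarrow>
    (\<forall>u\<in>W. \<forall>v\<in>W. p (u + v) \<le> p u + p v) \<and> (\<forall>c u. 0 < c \<longrightarrow> u \<in> W \<longrightarrow> p (c *\<^sub>R u) = c * p u)"

lemma linear_functional_vanishing_on:
  fixes z :: "'a::real_vector"
  assumes "z \<notin> span S"
  shows "\<exists>h :: 'a \<Rightarrow> real. linear h \<and> (\<forall>x\<in>S. h x = 0) \<and> h z = 1"
proof -
  obtain B where B: "B \<subseteq> span S" "independent B" "span S \<subseteq> span B" "card B = dim (span S)"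
    by (rule basis_exists)
  have "z \<notin> span B"
    using assms span_minimal[OF B(1) subspace_span] by auto
  then have "independent (insert z B)"
    using B(2) by (rule independent_insertI)
  then obtain h :: "'a \<Rightarrow> real" where h: "linear h" "\<forall>x\<in>insert z B. h x = (if x = z then 1 else 0)"
    using linear_independent_extend[of "insert z B" "\<lambda>x. if x = z then 1 else 0"] by blast
  have "h b = 0" if "b \<in> B" for b
    using h(2) that \<open>z \<notin> span B\<close> span_base[OF that] by auto
  moreover have "x \<in> span B" if "x \<in> S" for x
    using B(3) span_base[OF that] by blast
  ultimately have "\<forall>x\<in>S. h x = 0"
    using linear_eq_0_on_span[OF h(1)] by blast
  with h show ?thesis
    by auto
qed

lemma Hahn_Banach_step_bound:
  fixes p f :: "'a::real_vector \<Rightarrow> real"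
  assumes W: "subspace W" "subspace S" "S \<subseteq> W" "z \<in> W" and p: "sublinear_on W p"
    and f: "linear f" "\<And>x. x \<in> S \<Longrightarrow> f x \<le> p x"
    and c: "\<And>x. x \<in> S \<Longrightarrow> f x - p (x - z) \<le> c" "\<And>y. y \<in> S \<Longrightarrow> c \<le> p (y + z) - f y"
    and x: "x \<in> S"
  shows "f x + k * c \<le> p (x + k *\<^sub>R z)"
proof -
  have xz: "x + k *\<^sub>R z \<in> W"
    using W x by (auto intro: subspace_add subspace_scale)
  have scaled: "p (inverse t *\<^sub>R (x + k *\<^sub>R z)) = inverse t * p (x + k *\<^sub>R z)" if "0 < t" for t
    using p xz that by (simp add: sublinear_on_def)
  have fx: "f (inverse t *\<^sub>R x) = inverse t * f x" for t
    using f(1) by (simp add: linear_scale)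
  have x': "inverse t *\<^sub>R x \<in> S" for t
    using W(2) x by (rule subspace_scale)
  consider "0 < k" | "k < 0" | "k = 0"
    by linarith
  then show ?thesis
  proof cases
    case 1
    have "c \<le> p (inverse k *\<^sub>R x + z) - f (inverse k *\<^sub>R x)"
      using c(2)[OF x'] .
    also have "inverse k *\<^sub>R x + z = inverse k *\<^sub>R (x + k *\<^sub>R z)"
      using 1 by (simp add: scaleR_add_right)
    finally have "c \<le> inverse k * (p (x + k *\<^sub>R z) - f x)"
      using 1 by (simp add: scaled fx right_diff_distrib)
    with 1 show ?thesis
      by (simp add: field_simps)
  next
    case 2
    define t where "t = - k"
    have t: "0 < t" "k = - t"
      using 2 by (auto simp: t_def)
    have "f (inverse t *\<^sub>R x) - p (inverse t *\<^sub>R x - z) \<le> c"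
      using c(1)[OF x'] .
    also have "inverse t *\<^sub>R x - z = inverse t *\<^sub>R (x + k *\<^sub>R z)"
      using t(1) unfolding t(2) by (simp add: scaleR_diff_right)
    finally have "inverse t * (f x - p (x + k *\<^sub>R z)) \<le> c"
      using t(1) by (simp add: scaled fx right_diff_distrib)
    with t show ?thesis
      by (simp add: field_simps)
  qed (use f(2) x in simp)
qed

lemma Hahn_Banach_separating_constant:
  fixes p f :: "'a::real_vector \<Rightarrow> real"
  assumes W: "subspace W" "subspace S" "S \<subseteq> W" "z \<in> W" and p: "sublinear_on W p"
    and f: "linear f" "\<And>x. x \<in> S \<Longrightarrow> f x \<le> p x"
  obtains c where "\<And>x. x \<in> S \<Longrightarrow> f x - p (x - z) \<le> c" "\<And>y. y \<in> S \<Longrightarrow> c \<le> p (y + z) - f y"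
proof -
  have sep: "f x - p (x - z) \<le> p (y + z) - f y" if "x \<in> S" "y \<in> S" for x y
  proof -
    have "f x + f y = f (x + y)"
      using f(1) by (simp add: linear_add)
    also have "\<dots> \<le> p ((x - z) + (y + z))"
      using f(2) W(2) that by (simp add: subspace_add)
    also have "\<dots> \<le> p (x - z) + p (y + z)"
    proof -
      have "x - z \<in> W" "y + z \<in> W"
        using W that by (auto intro: subspace_diff subspace_add)
      with p show ?thesis
        unfolding sublinear_on_def by blast
    qed
    finally show ?thesis
      by linarith
  qed
  define c where "c = Sup {f x - p (x - z) | x. x \<in> S}"
  have "0 \<in> S"
    using W(2) by (rule subspace_0)
  then have "bdd_above {f x - p (x - z) | x. x \<in> S}"
    using sep[OF _ \<open>0 \<in> S\<close>] by (intro bdd_aboveI[where M = "p z - f 0"]) auto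
  then have "f x - p (x - z) \<le> c" if "x \<in> S" for x
    unfolding c_def using that by (auto intro!: cSup_upper)
  moreover have "c \<le> p (y + z) - f y" if "y \<in> S" for y
    unfolding c_def using sep that \<open>0 \<in> S\<close> by (auto intro!: cSup_least)
  ultimately show thesis
    by (rule that)
qed

lemma Hahn_Banach_step:
  fixes p f :: "'a::real_vector \<Rightarrow> real"
  assumes W: "subspace W" "subspace S" "S \<subseteq> W" "z \<in> W" and p: "sublinear_on W p"
    and f: "linear f" "\<And>x. x \<in> S \<Longrightarrow> f x \<le> p x"
  shows "\<exists>g. linear g \<and> (\<forall>x\<in>S. g x = f x) \<and> (\<forall>x\<in>span (insert z S). g x \<le> p x)"
proof (cases "z \<in> S")
  case True
  have "span (insert z S) = S"
    using True W(2) by (simp add: span_redundant span_base)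
  with f show ?thesis
    by auto
next
  case False
  obtain c where c_lower: "\<And>x. x \<in> S \<Longrightarrow> f x - p (x - z) \<le> c"
    and c_upper: "\<And>y. y \<in> S \<Longrightarrow> c \<le> p (y + z) - f y"
    using Hahn_Banach_separating_constant[OF W p f] by blast
  have span_S: "span S = S"
    using W(2) by simp
  with False have "z \<notin> span S"
    by metis
  then obtain h :: "'a \<Rightarrow> real" where h: "linear h" "\<forall>x\<in>S. h x = 0" "h z = 1"
    using linear_functional_vanishing_on by blast
  define g where "g v = f v + (c - f z) * h v" for v
  have "linear g"
    unfolding g_def using f(1) h(1)
    by (intro linearI) (simp_all add: linear_add linear_scale algebra_simps)
  moreover have "\<forall>x\<in>S. g x = f x"
    using h(2) by (simp add: g_def)
  moreover have "g v \<le> p v" if v: "v \<in> span (insert z S)" for v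
  proof -
    obtain k where x: "v - k *\<^sub>R z \<in> S"
      using v unfolding span_breakdown_eq span_S by blast
    have "h (v - k *\<^sub>R z) = 0"
      using h(2) x by blast
    then have "h v = k"
      using h(1,3) by (simp add: linear_diff linear_scale)
    then have "g v = f (v - k *\<^sub>R z) + k * c"
      using f(1) by (simp add: g_def linear_diff linear_scale algebra_simps)
    also have "\<dots> \<le> p v"
      using Hahn_Banach_step_bound[OF W p f c_lower c_upper x, where k = k] by simp
    finally show ?thesis .
  qed
  ultimately show ?thesis
    by blast
qed

lemma Hahn_Banach_finite_extension:
  fixes p f :: "'a::real_vector \<Rightarrow> real"
  assumes W: "subspace W" "subspace S" "S \<subseteq> W" and p: "sublinear_on W p"
    and f: "linear f" "\<And>x. x \<in> S \<Longrightarrow> f x \<le> p x"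
    and Z: "finite Z" "Z \<subseteq> W"
  shows "\<exists>g. linear g \<and> (\<forall>x\<in>S. g x = f x) \<and> (\<forall>x\<in>span (Z \<union> S). g x \<le> p x)"
  using Z
proof (induction Z rule: finite_induct)
  case empty
  have "span S = S"
    using W(2) by simp
  then show ?case
    by (intro exI[of _ f]) (simp add: f \<open>span S = S\<close>)
next
  case (insert z Z)
  then obtain g0 where g0: "linear g0" "\<forall>x\<in>S. g0 x = f x" "\<forall>x\<in>span (Z \<union> S). g0 x \<le> p x"
    by auto
  have "span (Z \<union> S) \<subseteq> W"
    using insert.prems W by (intro span_minimal) auto
  moreover have "z \<in> W"
    using insert.prems by simp
  ultimately obtain g where g: "linear g" "\<forall>x\<in>span (Z \<union> S). g x = g0 x"
      "\<forall>x\<in>span (insert z (span (Z \<union> S))). g x \<le> p x"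
    using Hahn_Banach_step[OF W(1) subspace_span _ _ p g0(1), of "Z \<union> S" z] g0(3) by blast
  moreover have "span (insert z (span (Z \<union> S))) = span (insert z Z \<union> S)"
    by (simp add: span_insert span_span)
  ultimately show ?case
    using g0(2) span_superset[of "Z \<union> S"] by (intro exI[of _ g]) auto
qed

section \<open>Functionals on a subspace of \<open>c\<^sub>0\<close> and their dual norm\<close>

lemma fdual_add: "f \<in> fdual F \<Longrightarrow> x \<in> F \<Longrightarrow> y \<in> F \<Longrightarrow> f (x + y) = f x + f y"
  unfolding fdual_def plus_fun_def by blast

lemma fdual_scaleR: "f \<in> fdual F \<Longrightarrow> x \<in> F \<Longrightarrow> f (c *\<^sub>R x) = c * f x"
  unfolding fdual_def scaleR_fun_def real_scaleR_def by blast

lemma fdual_outside: "f \<in> fdual F \<Longrightarrow> x \<notin> F \<Longrightarrow> f x = 0"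
  unfolding fdual_def by blast

lemma fdual_zero: "subspace F \<Longrightarrow> f \<in> fdual F \<Longrightarrow> f 0 = 0"
  using fdual_scaleR[of f F 0 0] subspace_0[of F] by simp

lemma subspace_fdual: "subspace (fdual F)"
  unfolding subspace_def fdual_def zero_fun_def plus_fun_def scaleR_fun_def real_scaleR_def
  by (auto simp: algebra_simps)

lemma fdual_extends_to_linear:
  assumes F: "subspace F" and f: "f \<in> fdual F"
  obtains g where "linear g" "\<And>x. x \<in> F \<Longrightarrow> g x = f x"
proof -
  obtain B where B: "B \<subseteq> F" "independent B" "F \<subseteq> span B" "card B = dim F"
    by (rule basis_exists)
  obtain g :: "(nat \<Rightarrow> real) \<Rightarrow> real" where g: "linear g" "\<forall>x\<in>B. g x = f x"
    using linear_independent_extend[OF B(2), of f] by blast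
  have "subspace {x \<in> F. g x = f x}"
    unfolding subspace_def
    using subspace_0[OF F] subspace_add[OF F] subspace_scale[OF F] fdual_zero[OF F f]
      fdual_add[OF f] fdual_scaleR[OF f] linear_0[OF g(1)] linear_add[OF g(1)] linear_scale[OF g(1)]
    by simp
  then have "span B \<subseteq> {x \<in> F. g x = f x}"
    using B(1) g(2) by (intro span_minimal) auto
  with B(3) have "\<And>x. x \<in> F \<Longrightarrow> g x = f x"
    by blast
  with g(1) show thesis
    by (rule that)
qed

lemma dualnorm_set_bdd_above:
  assumes "0 \<le> C" "\<And>x. x \<in> F \<Longrightarrow> \<bar>f x\<bar> \<le> C * supnorm x"
  shows "bdd_above {\<bar>f x\<bar> | x. x \<in> F \<and> supnorm x \<le> 1}"
proof (rule bdd_aboveI)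
  fix r
  assume "r \<in> {\<bar>f x\<bar> | x. x \<in> F \<and> supnorm x \<le> 1}"
  then obtain x where "x \<in> F" "supnorm x \<le> 1" "r = \<bar>f x\<bar>"
    by blast
  then show "r \<le> C"
    using assms(2)[of x] mult_left_mono[of "supnorm x" 1 C] assms(1) by simp
qed

lemma dualnorm_le:
  assumes "0 \<in> F" "0 \<le> C" "\<And>x. x \<in> F \<Longrightarrow> \<bar>f x\<bar> \<le> C * supnorm x"
  shows "dualnorm F f \<le> C"
  unfolding dualnorm_def
proof (rule cSup_least)
  show "{\<bar>f x\<bar> | x. x \<in> F \<and> supnorm x \<le> 1} \<noteq> {}"
    using assms(1) by force
next
  fix r
  assume "r \<in> {\<bar>f x\<bar> | x. x \<in> F \<and> supnorm x \<le> 1}"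
  then obtain x where "x \<in> F" "supnorm x \<le> 1" "r = \<bar>f x\<bar>"
    by blast
  then show "r \<le> C"
    using assms(3)[of x] mult_left_mono[of "supnorm x" 1 C] assms(2) by simp
qed

lemma dualnorm_nonneg:
  assumes "0 \<in> F" "f 0 = 0" "0 \<le> C" "\<And>x. x \<in> F \<Longrightarrow> \<bar>f x\<bar> \<le> C * supnorm x"
  shows "0 \<le> dualnorm F f"
proof -
  have "bdd_above {\<bar>f x\<bar> | x. x \<in> F \<and> supnorm x \<le> 1}"
    using assms(3,4) by (rule dualnorm_set_bdd_above)
  moreover have "\<bar>f 0\<bar> \<in> {\<bar>f x\<bar> | x. x \<in> F \<and> supnorm x \<le> 1}"
    using assms(1) by force
  ultimately have "\<bar>f 0\<bar> \<le> dualnorm F f"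
    unfolding dualnorm_def by (intro cSup_upper)
  with assms(2) show ?thesis
    by simp
qed

lemma abs_le_dualnorm:
  assumes F: "subspace F" "F \<subseteq> c0" and f: "\<And>c x. x \<in> F \<Longrightarrow> f (c *\<^sub>R x) = c * f x"
    and C: "0 \<le> C" "\<And>x. x \<in> F \<Longrightarrow> \<bar>f x\<bar> \<le> C * supnorm x" and x: "x \<in> F"
  shows "\<bar>f x\<bar> \<le> dualnorm F f * supnorm x"
proof -
  have x_bdd: "Bseq x"
    using F(2) x by (auto intro: c0_imp_Bseq)
  show ?thesis
  proof (cases "supnorm x = 0")
    case True
    then have "x = 0"
      using supnorm_eq_0_iff[OF x_bdd] by simp
    then have "f x = 0"
      using f[of 0 0] subspace_0[OF F(1)] by simp
    with True show ?thesis
      by simp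
  next
    case False
    define s where "s = supnorm x"
    have s: "0 < s"
      using False supnorm_nonneg[OF x_bdd] by (simp add: s_def)
    have "inverse s *\<^sub>R x \<in> F"
      using F(1) x by (rule subspace_scale)
    moreover have "supnorm (inverse s *\<^sub>R x) = 1"
      using s by (simp add: supnorm_scaleR[OF x_bdd] s_def[symmetric])
    ultimately have "\<bar>f (inverse s *\<^sub>R x)\<bar> \<le> dualnorm F f"
      using dualnorm_set_bdd_above[OF C] unfolding dualnorm_def by (intro cSup_upper) auto
    then have "inverse s * \<bar>f x\<bar> \<le> dualnorm F f"
      using f[OF x] s by (simp add: abs_mult)
    with s show ?thesis
      by (simp add: s_def[symmetric] field_simps)
  qed
qed

lemma sublinear_on_scaled_supnorm:
  assumes "0 \<le> d"
  shows "sublinear_on c0 (\<lambda>v. d * supnorm v)"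
  unfolding sublinear_on_def
proof (intro conjI ballI allI impI)
  fix u v
  assume "u \<in> c0" "v \<in> c0"
  then show "d * supnorm (u + v) \<le> d * supnorm u + d * supnorm v"
    using mult_left_mono[OF supnorm_triangle[OF c0_imp_Bseq c0_imp_Bseq] assms]
    by (simp add: distrib_left)
next
  fix c :: real and u
  assume "0 < c" "u \<in> c0"
  then show "d * supnorm (c *\<^sub>R u) = c * (d * supnorm u)"
    using supnorm_scaleR[OF c0_imp_Bseq] by simp
qed

lemma Hahn_Banach_supnorm_extension:
  assumes F: "subspace F" "F \<subseteq> c0" and Z: "finite Z" "Z \<subseteq> c0" and f: "linear f"
    and d: "0 \<le> d" "\<And>x. x \<in> F \<Longrightarrow> \<bar>f x\<bar> \<le> d * supnorm x"
  obtains g where "linear g" "\<And>x. x \<in> F \<Longrightarrow> g x = f x"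
    "\<And>v. v \<in> span (Z \<union> F) \<Longrightarrow> \<bar>g v\<bar> \<le> d * supnorm v"
proof -
  have p: "sublinear_on c0 (\<lambda>v. d * supnorm v)"
    using d(1) by (rule sublinear_on_scaled_supnorm)
  have fp: "f x \<le> d * supnorm x" if "x \<in> F" for x
    using d(2)[OF that] by simp
  obtain g where g: "linear g" "\<forall>x\<in>F. g x = f x" "\<forall>v\<in>span (Z \<union> F). g v \<le> d * supnorm v"
    using Hahn_Banach_finite_extension[OF subspace_c0 F(1) F(2) p f fp Z] by blast
  have "span (Z \<union> F) \<subseteq> c0"
    using F(2) Z(2) subspace_c0 by (intro span_minimal) auto
  have "\<bar>g v\<bar> \<le> d * supnorm v" if v: "v \<in> span (Z \<union> F)" for v
  proof -
    have "- v \<in> span (Z \<union> F)"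
      using v by (rule span_neg)
    then have "g (- v) \<le> d * supnorm (- v)"
      using g(3) by blast
    then have "- g v \<le> d * supnorm (- v)"
      by (simp add: linear_neg[OF g(1)])
    also have "supnorm (- v) = supnorm v"
      using supnorm_scaleR[of v "- 1"] \<open>span (Z \<union> F) \<subseteq> c0\<close> v by (simp add: c0_imp_Bseq subset_iff)
    finally show ?thesis
      using g(3) v by (simp add: abs_le_iff)
  qed
  with g(1,2) show thesis
    using that by blast
qed

lemma l1_norming_up_to_tail:
  assumes F: "subspace F" "F \<subseteq> c0" and f: "linear f"
    and d: "0 \<le> d" "\<And>x. x \<in> F \<Longrightarrow> \<bar>f x\<bar> \<le> d * supnorm x"
  obtains a where "a \<in> l1" "l1norm a \<le> d"
    "\<And>y. y \<in> F \<Longrightarrow> \<bar>f y - pair a y\<bar> \<le> d * supnorm (tail_seq M y)"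
proof -
  define V where "V = span (unit_seq ` {..<M} \<union> F)"
  obtain g where g: "linear g" "\<And>x. x \<in> F \<Longrightarrow> g x = f x" "\<And>v. v \<in> V \<Longrightarrow> \<bar>g v\<bar> \<le> d * supnorm v"
    using Hahn_Banach_supnorm_extension[OF F _ _ f d, of "unit_seq ` {..<M}"] unit_seq_c0
    unfolding V_def by blast
  have trunc_V: "truncate_seq M c \<in> V" for c
    unfolding truncate_seq_eq_sum V_def by (intro span_sum span_scale span_base) auto
  have g_trunc: "g (truncate_seq M c) = (\<Sum>n<M. c n * g (unit_seq n))" for c
    unfolding truncate_seq_eq_sum using g(1) by (simp add: linear_sum linear_scale)
  define a where "a = truncate_seq M (\<lambda>n. g (unit_seq n))"
  define s where "s = truncate_seq M (\<lambda>n. sgn (g (unit_seq n)))"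
  have abs_eq_sgn_mult: "\<bar>r\<bar> = sgn r * r" for r :: real
    by (cases r "0::real" rule: linorder_cases) auto
  have "supnorm s \<le> 1"
    by (rule supnorm_le) (simp add: s_def truncate_seq_def sgn_if)
  have "l1norm a = g s"
    unfolding a_def s_def l1norm_truncate_seq g_trunc by (simp add: abs_eq_sgn_mult)
  also have "\<dots> \<le> d * supnorm s"
    using g(3)[OF trunc_V] by (simp add: s_def abs_le_iff)
  also have "\<dots> \<le> d"
    using d(1) mult_left_mono[OF \<open>supnorm s \<le> 1\<close>] by simp
  finally have "l1norm a \<le> d" .
  moreover have "\<bar>f y - pair a y\<bar> \<le> d * supnorm (tail_seq M y)" if y: "y \<in> F" for y
  proof -
    have "pair a y = g (truncate_seq M y)"
      unfolding a_def pair_truncate_seq g_trunc by (simp add: mult.commute)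
    then have "f y - pair a y = g (y - truncate_seq M y)"
      using g(1,2) y by (simp add: linear_diff)
    moreover have "y - truncate_seq M y = tail_seq M y"
      using truncate_plus_tail_seq[of M y] by (simp add: algebra_simps)
    moreover have "y \<in> V"
      unfolding V_def using y by (intro span_base) simp
    then have "y - truncate_seq M y \<in> V"
      using trunc_V unfolding V_def by (intro span_diff)
    ultimately show ?thesis
      using g(3) by metis
  qed
  ultimately show thesis
    using truncate_seq_l1 that unfolding a_def by blast
qed

section \<open>The norm-one projection of an ideal\<close>

locale c0_ideal_projection =
  fixes F :: "(nat \<Rightarrow> real) set" and P :: "(nat \<Rightarrow> real) \<Rightarrow> nat \<Rightarrow> real"
  assumes subspace_F: "subspace F" and F_c0: "F \<subseteq> c0"
    and P_l1: "\<And>a. a \<in> l1 \<Longrightarrow> P a \<in> l1"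
    and P_linear: "linear_on_l1 P"
    and P_idem: "\<And>a. a \<in> l1 \<Longrightarrow> P (P a) = P a"
    and P_norm: "opnorm_l1_eq_1 P"
    and P_kernel: "{a \<in> l1. P a = (\<lambda>n. 0)} = annihilator F"
begin

lemma F_Bseq: "x \<in> F \<Longrightarrow> Bseq x"
  using F_c0 c0_imp_Bseq by blast

lemma P_add: "a \<in> l1 \<Longrightarrow> b \<in> l1 \<Longrightarrow> P (a + b) = P a + P b"
  using P_linear unfolding linear_on_l1_def plus_fun_def by blast

lemma P_scaleR: "a \<in> l1 \<Longrightarrow> P (c *\<^sub>R a) = c *\<^sub>R P a"
  using P_linear unfolding linear_on_l1_def scaleR_fun_def real_scaleR_def by blast

lemma P_zero: "P 0 = 0"
  using P_scaleR[of 0 0] subspace_0[OF subspace_l1] by simp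

lemma P_diff:
  assumes "a \<in> l1" "b \<in> l1"
  shows "P (a - b) = P a - P b"
proof -
  have "(- 1) *\<^sub>R b \<in> l1"
    using subspace_l1 assms(2) by (rule subspace_scale)
  then have "P (a + (- 1) *\<^sub>R b) = P a + (- 1) *\<^sub>R P b"
    by (simp only: P_add[OF assms(1)] P_scaleR[OF assms(2)])
  then show ?thesis
    by simp
qed

lemma P_sum_scaleR:
  "(\<And>i. i \<in> I \<Longrightarrow> a i \<in> l1) \<Longrightarrow> P (\<Sum>i\<in>I. c i *\<^sub>R a i) = (\<Sum>i\<in>I. c i *\<^sub>R P (a i))"
proof (induction I rule: infinite_finite_induct)
  case (insert i I)
  have "c i *\<^sub>R a i \<in> l1" "(\<Sum>i\<in>I. c i *\<^sub>R a i) \<in> l1"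
    using insert.prems subspace_l1 by (auto intro: subspace_sum subspace_scale)
  then have "P (\<Sum>i\<in>insert i I. c i *\<^sub>R a i) = P (c i *\<^sub>R a i) + P (\<Sum>i\<in>I. c i *\<^sub>R a i)"
    unfolding sum.insert[OF insert.hyps] by (rule P_add)
  also have "\<dots> = c i *\<^sub>R P (a i) + (\<Sum>i\<in>I. c i *\<^sub>R P (a i))"
    using insert by (simp add: P_scaleR)
  also have "\<dots> = (\<Sum>i\<in>insert i I. c i *\<^sub>R P (a i))"
    using insert.hyps by simp
  finally show ?case .
qed (simp_all add: P_zero)

lemma P_eq_0_iff: "a \<in> l1 \<Longrightarrow> P a = 0 \<longleftrightarrow> (\<forall>x\<in>F. pair a x = 0)"
  using P_kernel unfolding annihilator_def zero_fun_def by blast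

lemma pair_P: "a \<in> l1 \<Longrightarrow> x \<in> F \<Longrightarrow> pair (P a) x = pair a x"
  using P_eq_0_iff[of "a - P a"] P_diff[of a "P a"] P_idem P_l1 subspace_diff[OF subspace_l1]
    pair_diff_left[OF _ _ F_Bseq] by simp

lemma P_eq_if_pair_eq:
  "a \<in> l1 \<Longrightarrow> b \<in> l1 \<Longrightarrow> (\<And>x. x \<in> F \<Longrightarrow> pair a x = pair b x) \<Longrightarrow> P a = P b"
  using P_eq_0_iff[of "a - b"] P_diff[of a b] subspace_diff[OF subspace_l1]
    pair_diff_left[OF _ _ F_Bseq] by simp

lemma l1norm_P_le: 
  assumes a: "a \<in> l1"
  shows "l1norm (P a) \<le> l1norm a"
proof (cases "l1norm a = 0")
  case True
  then show ?thesis
    using a by (simp add: l1norm_eq_0_iff P_zero)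
next
  case False
  define r where "r = l1norm a"
  have r: "0 < r"
    using False l1norm_nonneg[OF a] by (simp add: r_def)
  have "inverse r *\<^sub>R a \<in> l1" "l1norm (inverse r *\<^sub>R a) \<le> 1"
    using a r subspace_l1 by (simp_all add: subspace_scale l1norm_scaleR r_def)
  then have "l1norm (P (inverse r *\<^sub>R a)) \<le> 1"
    using P_norm unfolding opnorm_l1_eq_1_def by (metis (mono_tags, lifting) cSup_upper mem_Collect_eq)
  then have "inverse r * l1norm (P a) \<le> 1"
    using a r P_l1 by (simp add: P_scaleR l1norm_scaleR)
  with r show ?thesis
    by (simp add: r_def field_simps)
qed

end

locale c0_ideal_basis = c0_ideal_projection +
  fixes Y :: "(nat \<Rightarrow> real) set" and u :: "(nat \<Rightarrow> real) \<Rightarrow> nat \<Rightarrow> real"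
  assumes finite_Y: "finite Y" and span_Y: "span Y = F"
    and u_l1: "\<And>y. y \<in> Y \<Longrightarrow> u y \<in> l1"
    and u_biorthogonal: "\<And>y y'. y \<in> Y \<Longrightarrow> y' \<in> Y \<Longrightarrow> pair (u y) y' = (if y = y' then 1 else 0)"
begin

definition represent :: "((nat \<Rightarrow> real) \<Rightarrow> real) \<Rightarrow> nat \<Rightarrow> real"
  where "represent f = (\<Sum>y\<in>Y. f y *\<^sub>R u y)"

definition dual_embedding :: "((nat \<Rightarrow> real) \<Rightarrow> real) \<Rightarrow> nat \<Rightarrow> real"
  where "dual_embedding f = (\<Sum>y\<in>Y. f y *\<^sub>R P (u y))"

lemma Y_subset_F: "Y \<subseteq> F"
  using span_superset span_Y by blast

lemma represent_l1: "represent f \<in> l1"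
  unfolding represent_def using u_l1 subspace_l1 by (auto intro: subspace_sum subspace_scale)

lemma dual_embedding_eq_P_represent: "dual_embedding f = P (represent f)"
  unfolding dual_embedding_def represent_def by (simp add: P_sum_scaleR u_l1)

lemma dual_embedding_l1: "dual_embedding f \<in> l1"
  using P_l1 represent_l1 by (simp add: dual_embedding_eq_P_represent)

lemma pair_represent_basis:
  assumes y: "y \<in> Y"
  shows "pair (represent f) y = f y"
proof -
  have "pair (represent f) y = (\<Sum>t\<in>Y. f t * pair (u t) y)"
    unfolding represent_def using u_l1 F_Bseq Y_subset_F y by (auto intro: pair_sum_scaleR_left)
  also have "\<dots> = (\<Sum>t\<in>Y. if t = y then f y else 0)"
    using u_biorthogonal y by (intro sum.cong) auto
  also have "\<dots> = f y"
    using finite_Y y by simp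
  finally show ?thesis .
qed

lemma pair_eq_on_F_if_eq_on_Y:
  assumes "a \<in> l1" "b \<in> l1" "\<And>y. y \<in> Y \<Longrightarrow> pair a y = pair b y" "x \<in> F"
  shows "pair a x = pair b x"
proof -
  have "pair (a - b) x = 0"
    using pair_eq_on_span[of "a - b" "\<lambda>_. 0" Y x] assms Y_subset_F F_Bseq subspace_l1 span_Y
    by (auto simp: pair_diff_left subspace_diff linear_zero)
  then show ?thesis
    using assms F_Bseq by (simp add: pair_diff_left)
qed

lemma l1norm_P_le_basis_pairings:
  assumes b: "b \<in> l1"
  shows "l1norm (P b) \<le> (\<Sum>y\<in>Y. \<bar>pair b y\<bar> * l1norm (u y))"
proof -
  have "pair b x = pair (represent (pair b)) x" if "x \<in> F" for x
    by (rule pair_eq_on_F_if_eq_on_Y[OF b represent_l1 _ that]) (simp add: pair_represent_basis)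
  then have "P b = P (represent (pair b))"
    by (rule P_eq_if_pair_eq[OF b represent_l1])
  then have "l1norm (P b) = l1norm (P (represent (pair b)))"
    by simp
  also have "\<dots> \<le> l1norm (represent (pair b))"
    by (rule l1norm_P_le[OF represent_l1])
  also have "\<dots> \<le> (\<Sum>y\<in>Y. l1norm (pair b y *\<^sub>R u y))"
    unfolding represent_def using u_l1 subspace_l1 by (intro l1norm_sum_le) (simp add: subspace_scale)
  also have "\<dots> = (\<Sum>y\<in>Y. \<bar>pair b y\<bar> * l1norm (u y))"
    using u_l1 by (simp add: l1norm_scaleR)
  finally show ?thesis .
qed

lemma pair_dual_embedding:
  assumes f: "f \<in> fdual F" and x: "x \<in> F"
  shows "pair (dual_embedding f) x = f x"
proof -
  obtain g where g: "linear g" "\<And>x. x \<in> F \<Longrightarrow> g x = f x"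
    using fdual_extends_to_linear[OF subspace_F f] by blast
  have "pair (represent f) x = g x"
  proof (rule pair_eq_on_span[OF represent_l1 g(1)])
    show "Bseq y" if "y \<in> Y" for y
      using that Y_subset_F F_Bseq by blast
    show "pair (represent f) y = g y" if "y \<in> Y" for y
      using that Y_subset_F g(2) pair_represent_basis by auto
    show "x \<in> span Y"
      using x span_Y by simp
  qed
  then show ?thesis
    using x g(2) represent_l1 by (simp add: dual_embedding_eq_P_represent pair_P)
qed

lemma dualnorm_fdual_bounds:
  assumes f: "f \<in> fdual F"
  shows "dualnorm F f \<le> l1norm (dual_embedding f)" "0 \<le> dualnorm F f"
    "\<And>x. x \<in> F \<Longrightarrow> \<bar>f x\<bar> \<le> dualnorm F f * supnorm x"
proof -
  have "0 \<in> F"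
    by (rule subspace_0[OF subspace_F])
  have bound: "\<bar>f x\<bar> \<le> l1norm (dual_embedding f) * supnorm x" if "x \<in> F" for x
    using abs_pair_le[OF dual_embedding_l1[of f] F_Bseq[OF that]] pair_dual_embedding[OF f that] by simp
  have nonneg: "0 \<le> l1norm (dual_embedding f)"
    by (rule l1norm_nonneg[OF dual_embedding_l1])
  show "dualnorm F f \<le> l1norm (dual_embedding f)"
    using \<open>0 \<in> F\<close> nonneg bound by (rule dualnorm_le)
  show "0 \<le> dualnorm F f"
    using \<open>0 \<in> F\<close> fdual_zero[OF subspace_F f] nonneg bound by (rule dualnorm_nonneg)
  show "\<bar>f x\<bar> \<le> dualnorm F f * supnorm x" if "x \<in> F" for x
    using subspace_F F_c0 fdual_scaleR[OF f] nonneg bound that by (rule abs_le_dualnorm)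
qed

lemma l1norm_dual_embedding_le_tails:
  assumes f: "f \<in> fdual F"
  shows "l1norm (dual_embedding f)
    \<le> dualnorm F f + (\<Sum>y\<in>Y. dualnorm F f * supnorm (tail_seq M y) * l1norm (u y))"
proof -
  let ?d = "dualnorm F f"
  obtain g where g: "linear g" "\<And>x. x \<in> F \<Longrightarrow> g x = f x"
    using fdual_extends_to_linear[OF subspace_F f] by blast
  have g_le: "\<bar>g x\<bar> \<le> ?d * supnorm x" if "x \<in> F" for x
    using dualnorm_fdual_bounds(3)[OF f that] g(2)[OF that] by simp
  obtain a where a: "a \<in> l1" "l1norm a \<le> ?d"
      "\<And>y. y \<in> F \<Longrightarrow> \<bar>g y - pair a y\<bar> \<le> ?d * supnorm (tail_seq M y)"
    using l1_norming_up_to_tail[where M = M, OF subspace_F F_c0 g(1) dualnorm_fdual_bounds(2)[OF f] g_le]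
    by blast
  have ra: "represent f - a \<in> l1"
    using represent_l1 a(1) subspace_l1 by (rule_tac subspace_diff)
  have "dual_embedding f = P a + P (represent f - a)"
    using a(1) represent_l1 by (simp add: dual_embedding_eq_P_represent P_diff)
  then have "l1norm (dual_embedding f) \<le> l1norm (P a) + l1norm (P (represent f - a))"
    using a(1) ra P_l1 by (simp add: l1norm_triangle)
  also have "\<dots> \<le> ?d + (\<Sum>y\<in>Y. \<bar>pair (represent f - a) y\<bar> * l1norm (u y))"
    using l1norm_P_le[OF a(1)] a(2) l1norm_P_le_basis_pairings[OF ra] by linarith
  also have "(\<Sum>y\<in>Y. \<bar>pair (represent f - a) y\<bar> * l1norm (u y))
      \<le> (\<Sum>y\<in>Y. ?d * supnorm (tail_seq M y) * l1norm (u y))"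
  proof (rule sum_mono)
    fix y
    assume y: "y \<in> Y"
    then have "pair (represent f - a) y = g y - pair a y"
      using represent_l1 a(1) Y_subset_F F_Bseq g(2) pair_represent_basis
      by (auto simp: pair_diff_left)
    then show "\<bar>pair (represent f - a) y\<bar> * l1norm (u y) \<le> ?d * supnorm (tail_seq M y) * l1norm (u y)"
      using a(3) y Y_subset_F l1norm_nonneg[OF u_l1[OF y]] by (auto intro: mult_right_mono)
  qed
  finally show ?thesis
    by simp
qed

lemma l1norm_dual_embedding:
  assumes f: "f \<in> fdual F"
  shows "l1norm (dual_embedding f) = dualnorm F f"
proof -
  let ?d = "dualnorm F f"
  have "(\<lambda>M. ?d + (\<Sum>y\<in>Y. ?d * supnorm (tail_seq M y) * l1norm (u y)))
      \<longlonglongrightarrow> ?d + (\<Sum>y\<in>Y. ?d * 0 * l1norm (u y))"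
    using Y_subset_F F_c0 by (intro tendsto_intros supnorm_tail_seq_tendsto_0) auto
  then have "l1norm (dual_embedding f) \<le> ?d"
    using l1norm_dual_embedding_le_tails[OF f] by (intro LIMSEQ_le_const) auto
  with dualnorm_fdual_bounds(1)[OF f] show ?thesis
    by simp
qed

lemma dual_embedding_add: "dual_embedding (\<lambda>x. f x + g x) = (\<lambda>n. dual_embedding f n + dual_embedding g n)"
  unfolding dual_embedding_def by (simp add: fun_eq_iff sum_fun_apply scaleR_fun_apply sum.distrib algebra_simps)

lemma dual_embedding_scale: "dual_embedding (\<lambda>x. c * f x) = (\<lambda>n. c * dual_embedding f n)"
  unfolding dual_embedding_def by (simp add: fun_eq_iff sum_fun_apply scaleR_fun_apply sum_distrib_left algebra_simps)

lemma linear_dual_embedding: "linear dual_embedding"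
  by (rule linearI) (simp_all add: plus_fun_def scaleR_fun_def dual_embedding_add dual_embedding_scale)

lemma inj_on_dual_embedding: "inj_on dual_embedding (fdual F)"
proof (rule inj_onI)
  fix f g
  assume f: "f \<in> fdual F" and g: "g \<in> fdual F" and eq: "dual_embedding f = dual_embedding g"
  show "f = g"
  proof
    fix x
    show "f x = g x"
      using pair_dual_embedding[OF f] pair_dual_embedding[OF g] eq fdual_outside[OF f] fdual_outside[OF g]
      by (cases "x \<in> F") auto
  qed
qed

lemma dual_embedding_in_span: "dual_embedding f \<in> span ((\<lambda>y. P (u y)) ` Y)"
  unfolding dual_embedding_def by (intro span_sum span_scale span_base) auto

end

section \<open>Strict convexity in finite dimension\<close>

lemma independent_image_if_scalars_zero:
  fixes x :: "nat \<Rightarrow> 'a::real_vector"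
  assumes "\<And>c. (\<Sum>i\<le>k. c i *\<^sub>R x i) = 0 \<Longrightarrow> \<forall>i\<le>k. c i = 0"
  shows "inj_on x {..k}" "independent (x ` {..k})"
proof -
  show inj: "inj_on x {..k}"
  proof (rule inj_onI, rule ccontr)
    fix i j
    assume ij: "i \<in> {..k}" "j \<in> {..k}" "x i = x j" "i \<noteq> j"
    define c where "c l = (if l = i then 1 else if l = j then - 1 else 0 :: real)" for l
    have "(\<Sum>l\<le>k. c l *\<^sub>R x l) = (\<Sum>l\<le>k. (if l = i then x i else 0) - (if l = j then x j else 0))"
      using ij(4) by (intro sum.cong) (auto simp: c_def)
    also have "\<dots> = 0"
      using ij by (simp add: sum_subtractf)
    finally show False
      using assms[of c] ij by (auto simp: c_def)
  qed
  show "independent (x ` {..k})"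
  proof (rule independent_if_scalars_zero)
    fix c v
    assume "(\<Sum>v\<in>x ` {..k}. c v *\<^sub>R v) = 0" "v \<in> x ` {..k}"
    moreover have "(\<Sum>v\<in>x ` {..k}. c v *\<^sub>R v) = (\<Sum>i\<le>k. c (x i) *\<^sub>R x i)"
      using sum.reindex[OF inj, of "\<lambda>v. c v *\<^sub>R v"] by simp
    ultimately show "c v = 0"
      using assms[of "\<lambda>i. c (x i)"] by auto
  qed simp
qed

lemma k_strictly_convex_l1_if_card_le:
  assumes G: "G \<subseteq> span B" "finite B" and k: "card B \<le> k"
  shows "k_strictly_convex_l1 G k"
  unfolding k_strictly_convex_l1_def
proof (intro allI impI)
  fix x :: "nat \<Rightarrow> nat \<Rightarrow> real"
  assume x: "(\<forall>i\<le>k. x i \<in> G \<and> l1norm (x i) = 1) \<and>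
    (\<forall>c. (\<lambda>n. \<Sum>i\<le>k. c i * x i n) = (\<lambda>n. 0) \<longrightarrow> (\<forall>i\<le>k. c i = 0))"
  have "\<forall>i\<le>k. c i = 0" if "(\<Sum>i\<le>k. c i *\<^sub>R x i) = 0" for c
    using x that by (simp add: fun_eq_iff sum_fun_apply scaleR_fun_apply)
  then have "inj_on x {..k}" "independent (x ` {..k})"
    using independent_image_if_scalars_zero[of x k] by blast+
  moreover have "x ` {..k} \<subseteq> span B"
    using x G(1) by auto
  ultimately have "k + 1 \<le> card B"
    using independent_span_bound[OF G(2)] card_image by fastforce
  with k show "l1norm (\<lambda>n. \<Sum>i\<le>k. x i n) < real k + 1"
    by simp
qed

theorem theorem4p15:
  fixes F :: "(nat \<Rightarrow> real) set"
  assumes "F \<subseteq> c0" and "is_subspace F" and "finite_dim F" and "is_ideal_c0 F"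
  shows "\<exists>G T k. G \<subseteq> l1 \<and> is_subspace G \<and> bij_betw T (fdual F) G \<and>
           (\<forall>f\<in>fdual F. \<forall>g\<in>fdual F. T (\<lambda>x. f x + g x) = (\<lambda>n. T f n + T g n)) \<and>
           (\<forall>c. \<forall>f\<in>fdual F. T (\<lambda>x. c * f x) = (\<lambda>n. c * T f n)) \<and>
           (\<forall>f\<in>fdual F. l1norm (T f) = dualnorm F f) \<and>
           k \<ge> 1 \<and> k_strictly_convex_l1 G k"
proof -
  have F: "subspace F"
    using assms(2) by (simp add: is_subspace_iff_subspace)
  obtain P where P: "c0_ideal_projection F P"
    using assms(1,4) F unfolding is_ideal_c0_def c0_ideal_projection_def by blast
  obtain Y where Y: "finite Y" "independent Y" "span Y = F"
    using finite_dim_obtains_basis[OF assms(3) F] .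
  have "Bseq y" if "y \<in> Y" for y
    using that Y(3) assms(1) span_superset c0_imp_Bseq by blast
  then obtain u where u: "\<forall>y\<in>Y. u y \<in> l1" "\<forall>y\<in>Y. \<forall>y'\<in>Y. pair (u y) y' = (if y = y' then 1 else 0)"
    using biorthogonal_l1_exists[OF Y(1,2)] by blast
  interpret c0_ideal_basis F P Y u
    using P Y u by (simp add: c0_ideal_basis_def c0_ideal_basis_axioms_def)
  let ?G = "dual_embedding ` fdual F"
  have "?G \<subseteq> span ((\<lambda>y. P (u y)) ` Y)" "card ((\<lambda>y. P (u y)) ` Y) \<le> card Y"
    using dual_embedding_in_span card_image_le[OF Y(1)] by auto
  then have "k_strictly_convex_l1 ?G (card Y + 1)"
    using Y(1) by (intro k_strictly_convex_l1_if_card_le[where B = "(\<lambda>y. P (u y)) ` Y"]) auto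
  moreover have "subspace ?G"
    by (rule linear_subspace_image[OF linear_dual_embedding subspace_fdual])
  ultimately show ?thesis
    using dual_embedding_l1 inj_on_dual_embedding l1norm_dual_embedding
    by (intro exI[of _ ?G] exI[of _ dual_embedding] exI[of _ "card Y + 1"])
      (auto simp: is_subspace_iff_subspace bij_betw_def dual_embedding_add dual_embedding_scale)
qed

end
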